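(* The Fatou set of the word semigroup satisfies $F(\mathcal{G})\supset \operatorname{int}(\mathcal{R})$.
   Context: $\Gamma_z=\langle \pm\begin{pmatrix}1&1\\0&1\end{pmatrix},\pm\begin{pmatrix}1&0\\ z&1\end{pmatrix}\rangle\subset PSL(2,\mathbb{C})$. The Riley slice is $\mathcal{R}=\{z\in\mathbb{C}: \Gamma_z\text{ is discrete and }\Omega(\Gamma_z)/\Gamma_z \text{ is a four times punctured sphere}\}$, $\Omega(\Gamma)$ the ordinary set. For $x,y\in PSL(2,\mathbb{C})$, $\gamma(x,y)=\operatorname{tr}[x,y]-2$. A good word is a reduced word $w=a^{m_1}ba^{m_2}b\cdots ba^{m_n}$ in $\langle a,b\mid b^2=1\rangle$ with $n\ge3$ and $m_i\ne0$ for $2\le i\le n-1$; its word polynomial $p_w\in\mathbb{Z}[z]$ is the unique polynomial with $\gamma(f,w(f,\phi))=p_w(\gamma(f,\phi))$ for every parabolic $f$ and order-two elliptic $\phi$ in $PSL(2,\mathbb{C})$ ($w(f,\phi)$: substitute $a=f,b=\phi$). $\mathcal{G}=\{p_w\}$; its Fatou set $F(\mathcal{G})$ is the set of points having a neighbourhood on which $\mathcal{G}$ is a normal family. *)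

theory Defs
  imports "HOL-Analysis.Analysis" "HOL-Computational_Algebra.Polynomial"
begin

type_synonym mat2 = "complex^2^2"

definition mk2 :: "complex \<Rightarrow> complex \<Rightarrow> complex \<Rightarrow> complex \<Rightarrow> mat2" where
  "mk2 a b c d = vector [vector [a, b], vector [c, d]]"

definition in_SL2 :: "mat2 \<Rightarrow> bool" where
  "in_SL2 M \<longleftrightarrow> det M = 1"

text \<open>Inverse of a determinant-one matrix (adjugate).\<close>
definition inv2 :: "mat2 \<Rightarrow> mat2" where
  "inv2 M = mk2 (M$2$2) (- (M$1$2)) (- (M$2$1)) (M$1$1)"

definition mpow :: "mat2 \<Rightarrow> int \<Rightarrow> mat2" where
  "mpow M m = (if 0 \<le> m then ((\<lambda>X. X ** M) ^^ nat m) (mat 1)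
               else ((\<lambda>X. X ** inv2 M) ^^ nat (- m)) (mat 1))"

definition commutator :: "mat2 \<Rightarrow> mat2 \<Rightarrow> mat2" where
  "commutator x y = x ** y ** inv2 x ** inv2 y"

text \<open>gamma(x,y) = tr[x,y] - 2 (well defined on PSL(2,C), independent of sign choices).\<close>
definition gamma :: "mat2 \<Rightarrow> mat2 \<Rightarrow> complex" where
  "gamma x y = trace (commutator x y) - 2"

text \<open>Parabolic elements of PSL(2,C), via an SL(2,C) representative.\<close>
definition parabolic :: "mat2 \<Rightarrow> bool" where
  "parabolic f \<longleftrightarrow> in_SL2 f \<and> (trace f)\<^sup>2 = 4 \<and> f \<noteq> mat 1 \<and> f \<noteq> - mat 1"

text \<open>Elements of order two in PSL(2,C), via an SL(2,C) representative.\<close>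
definition order_two :: "mat2 \<Rightarrow> bool" where
  "order_two \<phi> \<longleftrightarrow> in_SL2 \<phi> \<and> \<phi> \<noteq> mat 1 \<and> \<phi> \<noteq> - mat 1 \<and>
       (\<phi> ** \<phi> = mat 1 \<or> \<phi> ** \<phi> = - mat 1)"

text \<open>A word a^{m_1} b a^{m_2} b ... b a^{m_n} is encoded by the list [m_1,...,m_n].\<close>
definition good_word :: "int list \<Rightarrow> bool" where
  "good_word ms \<longleftrightarrow> length ms \<ge> 3 \<and> (\<forall>i. 1 \<le> i \<and> i < length ms - 1 \<longrightarrow> ms ! i \<noteq> 0)"

fun eval_word :: "int list \<Rightarrow> mat2 \<Rightarrow> mat2 \<Rightarrow> mat2" where
  "eval_word [] f \<phi> = mat 1"
| "eval_word [m] f \<phi> = mpow f m"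
| "eval_word (m # m' # ms) f \<phi> = mpow f m ** \<phi> ** eval_word (m' # ms) f \<phi>"

definition word_poly :: "int list \<Rightarrow> int poly" where
  "word_poly ms = (THE p. \<forall>f \<phi>. parabolic f \<longrightarrow> order_two \<phi> \<longrightarrow>
       gamma f (eval_word ms f \<phi>) = poly (map_poly of_int p) (gamma f \<phi>))"

definition word_semigroup :: "(complex \<Rightarrow> complex) set" where
  "word_semigroup = {(\<lambda>x. poly (map_poly of_int (word_poly w)) x) | w. good_word w}"

definition normal_family_on :: "(complex \<Rightarrow> complex) set \<Rightarrow> complex set \<Rightarrow> bool" where
  "normal_family_on F U \<longleftrightarrow>
     (\<forall>f :: nat \<Rightarrow> complex \<Rightarrow> complex. (\<forall>n. f n \<in> F) \<longrightarrow>
        (\<exists>r. strict_mono r \<and>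
           ((\<exists>g. \<forall>K. compact K \<and> K \<subseteq> U \<longrightarrow> uniform_limit K (\<lambda>n. f (r n)) g sequentially) \<or>
            (\<forall>K. compact K \<and> K \<subseteq> U \<longrightarrow>
               (\<forall>B. eventually (\<lambda>n. \<forall>x\<in>K. B \<le> norm (f (r n) x)) sequentially)))))"

definition fatou_set :: "(complex \<Rightarrow> complex) set \<Rightarrow> complex set" where
  "fatou_set F = {z. \<exists>U. open U \<and> z \<in> U \<and> normal_family_on F U}"

text \<open>The Riemann sphere: None is the point at infinity.\<close>
definition open_hat :: "complex option set \<Rightarrow> bool" where
  "open_hat U \<longleftrightarrow> open {z. Some z \<in> U} \<and>
     (None \<in> U \<longrightarrow> (\<exists>R. \<forall>z. R < norm z \<longrightarrow> Some z \<in> U))"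

lemma istopology_open_hat: "istopology open_hat"
  unfolding istopology_def
proof (intro conjI allI impI)
  fix S T assume S: "open_hat S" and T: "open_hat T"
  have "{z. Some z \<in> S \<inter> T} = {z. Some z \<in> S} \<inter> {z. Some z \<in> T}" by auto
  moreover have "None \<in> S \<inter> T \<Longrightarrow> \<exists>R. \<forall>z. R < norm z \<longrightarrow> Some z \<in> S \<inter> T"
  proof -
    assume "None \<in> S \<inter> T"
    then obtain R1 R2 where "\<forall>z. R1 < norm z \<longrightarrow> Some z \<in> S" "\<forall>z. R2 < norm z \<longrightarrow> Some z \<in> T"
      using S T unfolding open_hat_def by blast
    then show ?thesis by (intro exI[of _ "max R1 R2"]) auto
  qed
  ultimately show "open_hat (S \<inter> T)" using S T unfolding open_hat_def by auto
next
  fix K assume K: "\<forall>S\<in>K. open_hat S"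
  have "{z. Some z \<in> \<Union>K} = (\<Union>S\<in>K. {z. Some z \<in> S})" by auto
  moreover have "open (\<Union>S\<in>K. {z. Some z \<in> S})" using K unfolding open_hat_def by auto
  moreover have "None \<in> \<Union>K \<Longrightarrow> \<exists>R. \<forall>z. R < norm z \<longrightarrow> Some z \<in> \<Union>K"
    using K unfolding open_hat_def by blast
  ultimately show "open_hat (\<Union>K)" unfolding open_hat_def by auto
qed

definition riemann_sphere :: "complex option topology" where
  "riemann_sphere = topology open_hat"

definition moebius :: "mat2 \<Rightarrow> complex option \<Rightarrow> complex option" where
  "moebius M w = (let a = M$1$1; b = M$1$2; c = M$2$1; d = M$2$2 in
     (case w of
        None \<Rightarrow> (if c = 0 then None else Some (a / c))
      | Some z \<Rightarrow> (if c * z + d = 0 then None else Some ((a * z + b) / (c * z + d)))))"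

inductive_set gen_group :: "mat2 set \<Rightarrow> mat2 set" for S where
  gen_one: "mat 1 \<in> gen_group S"
| gen_base: "s \<in> S \<Longrightarrow> s \<in> gen_group S"
| gen_mult: "g \<in> gen_group S \<Longrightarrow> h \<in> gen_group S \<Longrightarrow> g ** h \<in> gen_group S"
| gen_inv: "g \<in> gen_group S \<Longrightarrow> inv2 g \<in> gen_group S"

text \<open>The full preimage in SL(2,C) of Gamma_z = < +-[[1,1],[0,1]], +-[[1,0],[z,1]] >.\<close>
definition Gamma :: "complex \<Rightarrow> mat2 set" where
  "Gamma z = gen_group {mk2 1 1 0 1, mk2 1 0 z 1, - mat 1}"

text \<open>Discreteness (the preimage in SL(2,C) is a discrete subset of the matrix space).\<close>
definition discrete_group :: "mat2 set \<Rightarrow> bool" where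
  "discrete_group G \<longleftrightarrow> (\<forall>g\<in>G. \<exists>e>0. \<forall>h\<in>G. dist h g < e \<longrightarrow> h = g)"

definition ordinary_set :: "mat2 set \<Rightarrow> complex option set" where
  "ordinary_set G = {x. \<exists>U. openin riemann_sphere U \<and> x \<in> U \<and>
        finite {g\<in>G. moebius g ` U \<inter> U \<noteq> {}}}"

text \<open>Omega(G)/G is homeomorphic to P: there is a quotient map from Omega onto P whose fibres
  are exactly the G-orbits.\<close>
definition quotient_homeomorphic :: "mat2 set \<Rightarrow> 'b topology \<Rightarrow> bool" where
  "quotient_homeomorphic G P \<longleftrightarrow>
     (\<exists>q. quotient_map (subtopology riemann_sphere (ordinary_set G)) P q \<and>
          (\<forall>x\<in>ordinary_set G. \<forall>y\<in>ordinary_set G.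
              q x = q y \<longleftrightarrow> (\<exists>g\<in>G. moebius g x = y)))"

definition four_punctured_sphere_quotient :: "mat2 set \<Rightarrow> bool" where
  "four_punctured_sphere_quotient G \<longleftrightarrow>
     (\<exists>S. card S = 4 \<and> quotient_homeomorphic G (subtopology riemann_sphere (UNIV - S)))"

definition riley_slice :: "complex set" where
  "riley_slice = {z. discrete_group (Gamma z) \<and> four_punctured_sphere_quotient (Gamma z)}"

end

(* Conjugating a parabolic f to shift = [[1,1],[0,1]] and an element phi of order two to
   elliptic c = [[0,-1/c],[c,0]] with c^2 = gamma(f,phi) reduces the word polynomial to
   p_w(c^2) = (W_21)^2 for W = w(shift, elliptic c), because gamma(shift, g) is the square of
   the lower-left entry of g; an explicit recursion for the entries of W shows that this is a
   polynomial in c^2 with integer coefficients.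
   The element elliptic c normalises Gamma_(c^2), hence so does W, and W shift W^-1 in Gamma_(c^2)
   has lower-left entry -p_w(c^2). If Gamma_u is discrete, Shimizu's lemma therefore gives
   p_w(u) = 0 or |p_w(u)| >= 1. On a disc inside the Riley slice every p_w is thus either
   identically zero or of modulus at least 1, and the theorems of Montel and Hurwitz make these
   polynomials a normal family. *)

theory Submission
  imports Defs "HOL-Complex_Analysis.Complex_Analysis"
begin

no_notation fps_nth (infixl \<open>$\<close> 75)

lemma mat2_eqI:
  fixes A B :: mat2
  assumes "A$1$1 = B$1$1" "A$1$2 = B$1$2" "A$2$1 = B$2$1" "A$2$2 = B$2$2"
  shows "A = B"
  using assms by (simp add: vec_eq_iff forall_2)

lemma mk2_nth [simp]:
  "mk2 a b c d $1$1 = a" "mk2 a b c d $1$2 = b" "mk2 a b c d $2$1 = c" "mk2 a b c d $2$2 = d"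
  by (simp_all add: mk2_def)

lemma mat2_cases:
  obtains a b c d where "(M::mat2) = mk2 a b c d"
  by (metis mat2_eqI mk2_nth)

lemma mk2_eq_iff: "mk2 a b c d = mk2 a' b' c' d' \<longleftrightarrow> a = a' \<and> b = b' \<and> c = c' \<and> d = d'"
  by (metis mk2_nth)

lemma mk2_mult: "mk2 a b c d ** mk2 a' b' c' d' = mk2 (a*a' + b*c') (a*b' + b*d') (c*a' + d*c') (c*b' + d*d')"
  by (rule mat2_eqI) (simp_all add: matrix_matrix_mult_def sum_2)

lemma mat_1_eq_mk2: "mat 1 = mk2 1 0 0 1"
  by (rule mat2_eqI) (simp_all add: mat_def)

lemma uminus_mk2: "- mk2 a b c d = mk2 (-a) (-b) (-c) (-d)"
  by (rule mat2_eqI) simp_all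

lemma det_mk2: "det (mk2 a b c d) = a*d - b*c"
  by (simp add: det_2)

lemma trace_mk2: "trace (mk2 a b c d) = a + d"
  by (simp add: trace_def sum_2)

lemma inv2_mk2: "inv2 (mk2 a b c d) = mk2 d (-b) (-c) a"
  by (simp add: inv2_def)

lemmas mk2_simps = mk2_mult mat_1_eq_mk2 uminus_mk2 det_mk2 trace_mk2 inv2_mk2 mk2_eq_iff

lemma tendsto_mk2 [tendsto_intros]:
  assumes "(a \<longlongrightarrow> a') F" "(b \<longlongrightarrow> b') F" "(c \<longlongrightarrow> c') F" "(d \<longlongrightarrow> d') F"
  shows "((\<lambda>x. mk2 (a x) (b x) (c x) (d x)) \<longlongrightarrow> mk2 a' b' c' d') F"
proof (intro vec_tendstoI)
  fix i j :: 2
  show "((\<lambda>x. mk2 (a x) (b x) (c x) (d x) $ i $ j) \<longlongrightarrow> mk2 a' b' c' d' $ i $ j) F"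
    using exhaust_2[of i] exhaust_2[of j] assms by auto
qed

lemma inv2_mult: "inv2 (A ** B) = inv2 B ** inv2 A" for A B :: mat2
  by (cases A rule: mat2_cases, cases B rule: mat2_cases) (simp add: mk2_simps algebra_simps)

lemma inv2_inv2 [simp]: "inv2 (inv2 A) = A"
  by (cases A rule: mat2_cases) (simp add: mk2_simps)

lemma inv2_one [simp]: "inv2 (mat 1) = mat 1"
  by (simp add: mk2_simps)

lemma inv2_uminus: "inv2 (- A) = - inv2 A"
  by (cases A rule: mat2_cases) (simp add: mk2_simps)

lemma det_inv2: "det (inv2 A) = det A" for A :: mat2
  by (cases A rule: mat2_cases) (simp add: mk2_simps algebra_simps)

lemma det_uminus2: "det (- A) = det (A::mat2)"
  by (cases A rule: mat2_cases) (simp add: mk2_simps algebra_simps)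

lemma matrix_mul_inv2_right: "det A = 1 \<Longrightarrow> A ** inv2 A = mat 1" for A :: mat2
  by (cases A rule: mat2_cases) (simp add: mk2_simps algebra_simps)

lemma matrix_mul_inv2_left: "det A = 1 \<Longrightarrow> inv2 A ** A = mat 1" for A :: mat2
  by (cases A rule: mat2_cases) (simp add: mk2_simps algebra_simps)

lemma matrix_mul_uminus_left2: "(- A) ** B = - (A ** B)" for A B :: mat2
  by (cases A rule: mat2_cases, cases B rule: mat2_cases) (simp add: mk2_simps algebra_simps)

lemma matrix_mul_uminus_right2: "A ** (- B) = - (A ** B)" for A B :: mat2
  by (cases A rule: mat2_cases, cases B rule: mat2_cases) (simp add: mk2_simps algebra_simps)

definition conj_by :: "mat2 \<Rightarrow> mat2 \<Rightarrow> mat2" where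
  "conj_by P A = P ** A ** inv2 P"

lemma conj_by_mult: "det P = 1 \<Longrightarrow> conj_by P A ** conj_by P B = conj_by P (A ** B)"
  by (simp add: conj_by_def matrix_mul_assoc)
     (simp add: matrix_mul_assoc[symmetric] matrix_mul_inv2_left)

lemma conj_by_matrix_mul: "conj_by (A ** B) g = conj_by A (conj_by B g)"
  by (simp add: conj_by_def inv2_mult matrix_mul_assoc)

lemma conj_by_one: "det P = 1 \<Longrightarrow> conj_by P (mat 1) = mat 1"
  by (simp add: conj_by_def matrix_mul_inv2_right)

lemma inv2_conj_by: "inv2 (conj_by P A) = conj_by P (inv2 A)"
  by (simp add: conj_by_def inv2_mult matrix_mul_assoc)

lemma det_conj_by: "det (conj_by P A) = det A * det P * det P"
  by (simp add: conj_by_def det_mul det_inv2)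

lemma trace_conj_by:
  assumes "det P = 1"
  shows "trace (conj_by P A) = trace A"
proof -
  obtain a b c d where P: "P = mk2 a b c d" by (rule mat2_cases)
  obtain a' b' c' d' where A: "A = mk2 a' b' c' d'" by (rule mat2_cases)
  have "trace (conj_by P A) = (a' + d') * det P"
    by (simp add: P A conj_by_def mk2_simps algebra_simps)
  then show ?thesis using assms by (simp add: A trace_mk2)
qed

abbreviation shift :: mat2 where
  "shift \<equiv> mk2 1 1 0 1"

lemma conj_by_shift:
  assumes "det M = 1"
  shows "conj_by M shift = mk2 (1 - M$1$1 * M$2$1) ((M$1$1)\<^sup>2) (- (M$2$1)\<^sup>2) (1 + M$1$1 * M$2$1)"
proof -
  obtain a b c d where M: "M = mk2 a b c d" by (rule mat2_cases)
  have "a * d - b * c = 1" using assms by (simp add: M mk2_simps)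
  then have "a * d - (a + b) * c = 1 - a * c" and "(c + d) * a - c * b = 1 + a * c"
    by algebra+
  then show ?thesis
    by (simp add: M conj_by_def mk2_simps power2_eq_square algebra_simps)
qed

lemma exists_det_1_first_column:
  fixes p r :: complex
  assumes "p \<noteq> 0 \<or> r \<noteq> 0"
  obtains P :: mat2 where "det P = 1" "P$1$1 = p" "P$2$1 = r"
proof (cases "p = 0")
  case True
  then show ?thesis using assms that[of "mk2 0 (- 1 / r) r 0"] by (simp add: mk2_simps)
next
  case False
  then show ?thesis using that[of "mk2 p 0 r (1 / p)"] by (simp add: mk2_simps)
qed

section \<open>Word polynomials\<close>

lemma gamma_conj_by: "det P = 1 \<Longrightarrow> gamma (conj_by P f) (conj_by P g) = gamma f g"
  by (simp add: gamma_def commutator_def inv2_conj_by conj_by_mult)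
     (simp add: trace_conj_by)

lemma gamma_uminus_left: "gamma (- f) g = gamma f g"
  by (simp add: gamma_def commutator_def inv2_uminus matrix_mul_uminus_left2 matrix_mul_uminus_right2)

lemma gamma_uminus_right: "gamma f (- g) = gamma f g"
  by (simp add: gamma_def commutator_def inv2_uminus matrix_mul_uminus_left2 matrix_mul_uminus_right2)

lemma gamma_shift:
  assumes "det g = 1"
  shows "gamma shift g = (g$2$1)\<^sup>2"
proof -
  obtain a b c d where g: "g = mk2 a b c d" by (rule mat2_cases)
  have "gamma shift g = 2 * det g + c\<^sup>2 - 2"
    by (simp add: g gamma_def commutator_def mk2_simps algebra_simps power2_eq_square)
  then show ?thesis using assms by (simp add: g)
qed

lemma funpow_mult_conj_by:
  "det P = 1 \<Longrightarrow> ((\<lambda>X. X ** conj_by P A) ^^ n) (mat 1) = conj_by P (((\<lambda>X. X ** A) ^^ n) (mat 1))"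
  by (induction n) (simp_all add: conj_by_one conj_by_mult)

lemma mpow_conj_by: "det P = 1 \<Longrightarrow> mpow (conj_by P A) m = conj_by P (mpow A m)"
  by (simp add: mpow_def funpow_mult_conj_by inv2_conj_by)

lemma eval_word_conj_by:
  "det P = 1 \<Longrightarrow> eval_word ms (conj_by P f) (conj_by P \<phi>) = conj_by P (eval_word ms f \<phi>)"
  by (induction ms f \<phi> rule: eval_word.induct) (simp_all add: conj_by_one mpow_conj_by conj_by_mult)

lemma funpow_mult_uminus:
  fixes A :: mat2
  shows "((\<lambda>X. X ** (- A)) ^^ n) (mat 1) \<in> {((\<lambda>X. X ** A) ^^ n) (mat 1), - ((\<lambda>X. X ** A) ^^ n) (mat 1)}"
  by (induction n) (auto simp: matrix_mul_uminus_left2 matrix_mul_uminus_right2)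

lemma mpow_uminus: "mpow (- f) m \<in> {mpow f m, - mpow f m}"
  using funpow_mult_uminus[where A = f and n = "nat m"]
    funpow_mult_uminus[where A = "inv2 f" and n = "nat (- m)"]
  by (simp add: mpow_def inv2_uminus)

lemma eval_word_uminus: "eval_word ms (- f) \<phi> \<in> {eval_word ms f \<phi>, - eval_word ms f \<phi>}"
proof (induction ms f \<phi> rule: eval_word.induct)
  case (3 m m' ms f \<phi>)
  then show ?case
    using mpow_uminus[of f m] by (auto simp: matrix_mul_uminus_left2 matrix_mul_uminus_right2)
qed (use mpow_uminus in auto)

lemma det_mpow:
  assumes "det A = 1"
  shows "det (mpow A m) = 1"
proof -
  have "det (((\<lambda>X. X ** B) ^^ n) (mat 1)) = 1" if "det B = 1" for B :: mat2 and n
    using that by (induction n) (simp_all add: det_mul)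
  then show ?thesis using assms by (simp add: mpow_def det_inv2)
qed

lemma det_eval_word: "det f = 1 \<Longrightarrow> det \<phi> = 1 \<Longrightarrow> det (eval_word ms f \<phi>) = 1"
  by (induction ms f \<phi> rule: eval_word.induct) (simp_all add: det_mpow det_mul)

lemma mpow_shift: "mpow shift m = mk2 1 (of_int m) 0 1"
proof -
  have pow: "((\<lambda>X. X ** mk2 1 s 0 1) ^^ n) (mat 1) = mk2 1 (of_nat n * s) 0 1" for s n
    by (induction n) (simp_all add: mk2_simps algebra_simps)
  show ?thesis
    by (simp add: mpow_def inv2_mk2 pow)
qed

abbreviation ipoly :: "int poly \<Rightarrow> complex \<Rightarrow> complex" where
  "ipoly p \<equiv> poly (map_poly of_int p)"

lemma map_poly_of_int_pCons [simp]:
  "map_poly (of_int :: int \<Rightarrow> 'a::ring_1) (pCons a p) = pCons (of_int a) (map_poly of_int p)"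
  by (simp add: map_poly_pCons)

lemma map_poly_of_int_smult [simp]:
  "map_poly (of_int :: int \<Rightarrow> 'a::comm_ring_1) (smult a p) = smult (of_int a) (map_poly of_int p)"
  by (simp add: map_poly_smult)

lemma map_poly_of_int_add [simp]:
  "map_poly (of_int :: int \<Rightarrow> 'a::ring_1) (p + q) = map_poly of_int p + map_poly of_int q"
  by (intro poly_eqI) (simp add: coeff_map_poly)

lemma map_poly_of_int_diff [simp]:
  "map_poly (of_int :: int \<Rightarrow> 'a::ring_1) (p - q) = map_poly of_int p - map_poly of_int q"
  by (intro poly_eqI) (simp add: coeff_map_poly)

lemma map_poly_of_int_mult [simp]:
  "map_poly (of_int :: int \<Rightarrow> 'a::comm_ring_1) (p * q) = map_poly of_int p * map_poly of_int q"
  by (induction p rule: pCons_induct) (simp_all add: algebra_simps)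

lemma map_poly_of_int_inj:
  "map_poly (of_int :: int \<Rightarrow> 'a::ring_char_0) p = map_poly of_int q \<Longrightarrow> p = q"
  by (metis coeff_map_poly of_int_0 of_int_eq_iff poly_eqI)

definition elliptic :: "complex \<Rightarrow> mat2" where
  "elliptic c = mk2 0 (- 1 / c) c 0"

text \<open>A state \<open>(par, A, B, C, D)\<close> encodes the matrix \<open>w(shift, elliptic c)\<close> as
  \<open>[[c A, B / c], [c C, c D]]\<close> if \<open>par\<close> (the word has an odd number of letters \<open>b\<close>) and as
  \<open>[[A, B], [c\<^sup>2 C, D]]\<close> otherwise, the polynomials being evaluated at \<open>c\<^sup>2\<close>.\<close>
fun word_entry_polys :: "int list \<Rightarrow> bool \<times> int poly \<times> int poly \<times> int poly \<times> int poly" where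
  "word_entry_polys [] = (False, 1, 0, 0, 1)"
| "word_entry_polys [m] = (False, 1, [:m:], 0, 1)"
| "word_entry_polys (m # m' # ms) = (case word_entry_polys (m' # ms) of (par, A, B, C, D) \<Rightarrow>
     if par then (False, [:0, m:] * A - C, [:m:] * B - D, A, B)
     else (True, [:m:] * A - C, [:0, m:] * B - D, A, B))"

definition explicit_word_poly :: "int list \<Rightarrow> int poly" where
  "explicit_word_poly ms = (case word_entry_polys ms of (par, A, B, C, D) \<Rightarrow>
     if par then [:0, 1:] * C\<^sup>2 else [:0, 0, 1:] * C\<^sup>2)"

lemma eval_word_shift_elliptic:
  assumes "c \<noteq> 0"
  shows "eval_word ms shift (elliptic c) = (case word_entry_polys ms of (par, A, B, C, D) \<Rightarrow>
     if par then mk2 (c * ipoly A (c\<^sup>2)) (ipoly B (c\<^sup>2) / c) (c * ipoly C (c\<^sup>2)) (c * ipoly D (c\<^sup>2))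
     else mk2 (ipoly A (c\<^sup>2)) (ipoly B (c\<^sup>2)) (c\<^sup>2 * ipoly C (c\<^sup>2)) (ipoly D (c\<^sup>2)))"
proof (induction ms rule: word_entry_polys.induct)
  case (3 m m' ms)
  obtain par A B C D where w: "word_entry_polys (m' # ms) = (par, A, B, C, D)"
    by (cases "word_entry_polys (m' # ms)") auto
  from 3 w assms show ?case
    by (cases par) (simp_all add: mpow_shift elliptic_def mk2_simps field_simps power2_eq_square)
qed (simp_all add: mpow_shift mk2_simps)

lemma lower_left_eval_word_elliptic:
  assumes "c \<noteq> 0"
  shows "(eval_word ms shift (elliptic c) $2$1)\<^sup>2 = ipoly (explicit_word_poly ms) (c\<^sup>2)"
proof -
  obtain par A B C D where w: "word_entry_polys ms = (par, A, B, C, D)"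
    by (cases "word_entry_polys ms") auto
  show ?thesis
    using eval_word_shift_elliptic[OF assms, of ms] w
    by (cases par) (simp_all add: explicit_word_poly_def power_mult_distrib power2_eq_square)
qed

lemma explicit_word_poly_at_0: "ipoly (explicit_word_poly ms) 0 = 0"
  by (simp add: explicit_word_poly_def split: prod.split)

lemma lower_left_eval_word_shift:
  assumes "\<phi>$2$1 = 0"
  shows "eval_word ms shift \<phi> $2$1 = 0"
proof -
  have mult_21: "(A ** B)$2$1 = A$2$1 * B$1$1 + A$2$2 * B$2$1" for A B :: mat2
    by (simp add: matrix_matrix_mult_def sum_2)
  show ?thesis
    using assms
    by (induction ms shift \<phi> rule: eval_word.induct) (simp_all add: mult_21 mpow_shift mk2_simps)
qed

lemma gamma_shift_eval_word:
  assumes det: "det \<phi> = 1" and trace: "trace \<phi> = 0"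
  shows "gamma shift (eval_word ms shift \<phi>) = ipoly (explicit_word_poly ms) (gamma shift \<phi>)"
proof -
  obtain a b c d where \<phi>: "\<phi> = mk2 a b c d" by (rule mat2_cases)
  have d: "d = - a" using trace by (simp add: \<phi> mk2_simps eq_neg_iff_add_eq_0 add.commute)
  have det_W: "det (eval_word ms shift \<phi>) = 1"
    using det by (intro det_eval_word) (simp_all add: mk2_simps)
  have gamma_\<phi>: "gamma shift \<phi> = c\<^sup>2" using gamma_shift[OF det] by (simp add: \<phi>)
  show ?thesis
  proof (cases "c = 0")
    case True
    then have "eval_word ms shift \<phi> $2$1 = 0" by (intro lower_left_eval_word_shift) (simp add: \<phi>)
    then show ?thesis using gamma_shift[OF det_W] gamma_\<phi> True by (simp add: explicit_word_poly_at_0)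
  next
    case False
    define T where "T = mk2 1 (a / c) 0 1"
    have det_T: "det T = 1" by (simp add: T_def mk2_simps)
    have "conj_by T shift = shift" by (simp add: T_def conj_by_def mk2_simps)
    moreover have "conj_by T (elliptic c) = \<phi>"
    proof -
      have "- a * a - b * c = 1" using det by (simp add: \<phi> d mk2_simps)
      then have "b * c = - 1 - a * a" by algebra
      then have "b = (- 1 - a * a) / c" using False by (simp add: eq_divide_eq)
      then show ?thesis using False
        by (simp add: T_def conj_by_def mk2_simps elliptic_def \<phi> d) (simp add: field_simps)
    qed
    ultimately have "gamma shift (eval_word ms shift \<phi>) = gamma shift (eval_word ms shift (elliptic c))"
      using gamma_conj_by[OF det_T] eval_word_conj_by[OF det_T] by metis
    also have "\<dots> = (eval_word ms shift (elliptic c) $2$1)\<^sup>2"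
      by (intro gamma_shift det_eval_word) (simp_all add: mk2_simps elliptic_def False)
    also have "\<dots> = ipoly (explicit_word_poly ms) (gamma shift \<phi>)"
      using lower_left_eval_word_elliptic[OF False] gamma_\<phi> by simp
    finally show ?thesis .
  qed
qed

lemma trace_2_imp_conj_shift:
  assumes det: "det f = 1" and trace: "trace f = 2" and "f \<noteq> mat 1"
  obtains P where "det P = 1" "f = conj_by P shift"
proof -
  obtain a b c d where f: "f = mk2 a b c d" by (rule mat2_cases)
  have d: "d = 2 - a" using trace by (simp add: f mk2_simps algebra_simps)
  have key: "(1 - a)\<^sup>2 = - b * c" using det by (simp add: f d mk2_simps) algebra
  obtain p r where p: "p\<^sup>2 = b" and r: "r\<^sup>2 = - c" and pr: "p * r = 1 - a" and nz: "p \<noteq> 0 \<or> r \<noteq> 0"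
  proof (cases "b = 0")
    case True
    with key have "a = 1" by simp
    with True d \<open>f \<noteq> mat 1\<close> have "c \<noteq> 0" by (auto simp: f mk2_simps)
    with True \<open>a = 1\<close> show ?thesis using that[of 0 "csqrt (- c)"] by simp
  next
    case False
    define p where "p = csqrt b"
    have "p\<^sup>2 = b" "p \<noteq> 0" using False by (auto simp: p_def)
    moreover have "((1 - a) / p)\<^sup>2 = - c"
      using key False \<open>p\<^sup>2 = b\<close> \<open>p \<noteq> 0\<close> by (simp add: field_simps)
    ultimately show ?thesis using that[of p "(1 - a) / p"] by simp
  qed
  obtain P :: mat2 where "det P = 1" "P$1$1 = p" "P$2$1 = r" using exists_det_1_first_column[OF nz] .
  moreover have "f = conj_by P shift"
    using conj_by_shift[OF \<open>det P = 1\<close>] p r pr by (simp add: f d \<open>P$1$1 = p\<close> \<open>P$2$1 = r\<close> mk2_simps)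
  ultimately show ?thesis using that by blast
qed

lemma parabolic_imp_conj_shift:
  assumes "parabolic f"
  obtains P where "det P = 1" "f = conj_by P shift \<or> f = - conj_by P shift"
proof -
  have det: "det f = 1" and ne: "f \<noteq> mat 1" "f \<noteq> - mat 1"
    using assms by (auto simp: parabolic_def in_SL2_def)
  have "(trace f - 2) * (trace f + 2) = 0"
    using assms by (simp add: parabolic_def algebra_simps power2_eq_square)
  moreover have "trace (- f) = - trace f"
    by (cases f rule: mat2_cases) (simp add: mk2_simps)
  ultimately consider "trace f = 2" | "trace (- f) = 2"
    by (auto simp: add_eq_0_iff)
  then show ?thesis
  proof cases
    case 1
    then show ?thesis using trace_2_imp_conj_shift[OF det _ ne(1)] that by blast
  next
    case 2
    have "- f \<noteq> mat 1" using ne(2) by (metis minus_minus)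
    then obtain P where "det P = 1" "- f = conj_by P shift"
      using trace_2_imp_conj_shift[OF _ 2] det by (metis det_uminus2)
    then show ?thesis using that by (metis minus_minus)
  qed
qed

lemma order_two_imp_det_1_trace_0:
  assumes "order_two \<phi>"
  shows "det \<phi> = 1" "trace \<phi> = 0"
proof -
  obtain a b c d where \<phi>: "\<phi> = mk2 a b c d" by (rule mat2_cases)
  show det: "det \<phi> = 1" using assms by (simp add: order_two_def in_SL2_def)
  have ne: "\<phi> \<noteq> mat 1" "\<phi> \<noteq> - mat 1" using assms by (auto simp: order_two_def)
  have "\<phi> ** \<phi> = mat 1 \<or> \<phi> ** \<phi> = - mat 1" using assms by (auto simp: order_two_def)
  then have "(\<phi> ** \<phi>)$1$2 = 0" "(\<phi> ** \<phi>)$2$1 = 0" "(\<phi> ** \<phi>)$1$1 = (\<phi> ** \<phi>)$2$2"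
    by (auto simp: mat_1_eq_mk2 uminus_mk2)
  then have sq: "b * (a + d) = 0" "c * (a + d) = 0" "a * a = d * d"
    by (simp_all add: \<phi> mk2_mult algebra_simps)
  show "trace \<phi> = 0"
  proof (rule ccontr)
    assume "trace \<phi> \<noteq> 0"
    then have "a + d \<noteq> 0" by (simp add: \<phi> mk2_simps)
    with sq have "b = 0" "c = 0" by simp_all
    have "(a - d) * (a + d) = 0" using sq(3) by algebra
    with \<open>a + d \<noteq> 0\<close> have "d = a" by simp
    with det \<open>b = 0\<close> have "a * a = 1" by (simp add: \<phi> mk2_simps)
    then have "a = 1 \<or> a = - 1" by (metis square_eq_1_iff)
    with ne show False using \<open>b = 0\<close> \<open>c = 0\<close> \<open>d = a\<close> by (auto simp: \<phi> mk2_simps)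
  qed
qed

lemma gamma_eval_word_uminus: "gamma (- f) (eval_word ms (- f) \<phi>) = gamma f (eval_word ms f \<phi>)"
  using eval_word_uminus[of ms f \<phi>] by (auto simp: gamma_uminus_left gamma_uminus_right)

lemma gamma_eval_word:
  assumes "parabolic f" "order_two \<phi>"
  shows "gamma f (eval_word ms f \<phi>) = ipoly (explicit_word_poly ms) (gamma f \<phi>)"
proof -
  obtain P where det_P: "det P = 1" and f: "f = conj_by P shift \<or> f = - conj_by P shift"
    using parabolic_imp_conj_shift[OF assms(1)] .
  define \<psi> where "\<psi> = conj_by (inv2 P) \<phi>"
  have \<phi>: "\<phi> = conj_by P \<psi>"
    using det_P by (simp add: \<psi>_def conj_by_def matrix_mul_assoc matrix_mul_inv2_left)
                   (simp add: matrix_mul_assoc[symmetric] matrix_mul_inv2_right)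
  have det_\<psi>: "det \<psi> = 1" and trace_\<psi>: "trace \<psi> = 0"
    using order_two_imp_det_1_trace_0[OF assms(2)] det_P
    by (simp_all add: \<psi>_def det_conj_by det_inv2 trace_conj_by)
  have "gamma (conj_by P shift) (eval_word ms (conj_by P shift) \<phi>) =
      ipoly (explicit_word_poly ms) (gamma (conj_by P shift) \<phi>)"
    using gamma_shift_eval_word[OF det_\<psi> trace_\<psi>]
    by (simp add: \<phi> eval_word_conj_by[OF det_P] gamma_conj_by[OF det_P])
  with f show ?thesis by (metis gamma_eval_word_uminus gamma_uminus_left)
qed

lemma gamma_shift_surj_order_two: "\<exists>\<phi>. order_two \<phi> \<and> gamma shift \<phi> = y"
proof (cases "y = 0")
  case True
  have "order_two (mk2 \<i> 0 0 (- \<i>)) \<and> gamma shift (mk2 \<i> 0 0 (- \<i>)) = 0"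
    by (simp add: order_two_def in_SL2_def mk2_simps gamma_shift)
  with True show ?thesis by blast
next
  case False
  then have "csqrt y \<noteq> 0" by auto
  then have "order_two (elliptic (csqrt y)) \<and> gamma shift (elliptic (csqrt y)) = y"
    by (simp add: order_two_def in_SL2_def elliptic_def mk2_simps gamma_shift)
  then show ?thesis by blast
qed

lemma word_poly_eq_explicit: "word_poly ms = explicit_word_poly ms"
  unfolding word_poly_def
proof (rule the_equality)
  show "\<forall>f \<phi>. parabolic f \<longrightarrow> order_two \<phi> \<longrightarrow>
      gamma f (eval_word ms f \<phi>) = ipoly (explicit_word_poly ms) (gamma f \<phi>)"
    using gamma_eval_word by blast
next
  fix p
  assume p: "\<forall>f \<phi>. parabolic f \<longrightarrow> order_two \<phi> \<longrightarrow>
      gamma f (eval_word ms f \<phi>) = ipoly p (gamma f \<phi>)"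
  have "parabolic shift" by (simp add: parabolic_def in_SL2_def mk2_simps)
  then have "ipoly p y = ipoly (explicit_word_poly ms) y" for y
    using gamma_shift_surj_order_two[of y] p gamma_eval_word by metis
  then show "p = explicit_word_poly ms"
    by (intro map_poly_of_int_inj[where 'a = complex] poly_eq_poly_eq_iff[THEN iffD1] ext)
qed

section \<open>Shimizu's lemma\<close>

text \<open>Conjugating \<open>shift\<close> by \<open>h\<close> squares the lower-left entry up to sign, so for
  \<open>0 < |h\<^sub>2\<^sub>1| < 1\<close> these iterates converge to \<open>shift\<close>, which is impossible in a discrete group.\<close>
definition shimizu_seq :: "mat2 \<Rightarrow> nat \<Rightarrow> mat2" where
  "shimizu_seq h n = ((\<lambda>M. conj_by M shift) ^^ n) h"

lemma shimizu_seq_0 [simp]: "shimizu_seq h 0 = h"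
  and shimizu_seq_Suc: "shimizu_seq h (Suc n) = conj_by (shimizu_seq h n) shift"
  by (simp_all add: shimizu_seq_def)

lemma det_shimizu_seq: "det h = 1 \<Longrightarrow> det (shimizu_seq h n) = 1"
  by (induction n) (simp_all add: shimizu_seq_Suc det_conj_by det_mk2)

lemma shimizu_seq_Suc_entries:
  assumes "det h = 1"
  shows "shimizu_seq h (Suc n) $1$1 = 1 - shimizu_seq h n $1$1 * shimizu_seq h n $2$1"
    and "shimizu_seq h (Suc n) $2$1 = - (shimizu_seq h n $2$1)\<^sup>2"
  using conj_by_shift[OF det_shimizu_seq[OF assms, of n]] by (simp_all add: shimizu_seq_Suc)

lemma norm_lower_left_shimizu_seq:
  assumes "det h = 1" "norm (h$2$1) \<le> 1"
  shows "norm (shimizu_seq h n $2$1) \<le> norm (h$2$1) ^ Suc n"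
proof (induction n)
  case (Suc n)
  let ?c = "shimizu_seq h n $2$1" and ?t = "norm (h$2$1)"
  have "?t ^ Suc n \<le> ?t" using assms(2) by (simp add: power_le_one mult_left_le)
  then have "norm ?c * norm ?c \<le> ?t ^ Suc n * ?t"
    using Suc.IH by (intro mult_mono) auto
  then show ?case
    by (simp add: shimizu_seq_Suc_entries(2)[OF assms(1)] norm_mult power2_eq_square mult.commute)
qed simp

lemma bounded_upper_left_shimizu_seq:
  assumes "det h = 1" "norm (h$2$1) < 1"
  obtains K where "\<And>n. norm (shimizu_seq h n $1$1) \<le> K"
proof -
  define t where "t = norm (h$2$1)"
  define K where "K = max (norm (h$1$1)) (1 / (1 - t))"
  have t: "0 \<le> t" "t < 1" using assms(2) by (simp_all add: t_def)
  have "1 / (1 - t) \<le> K" by (simp add: K_def)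
  then have "1 \<le> K * (1 - t)" using t by (simp add: pos_divide_le_eq)
  then have K: "0 \<le> K" "1 + K * t \<le> K" by (simp_all add: algebra_simps K_def le_max_iff_disj)
  have "norm (shimizu_seq h n $1$1) \<le> K" for n
  proof (induction n)
    case 0
    then show ?case by (simp add: K_def)
  next
    case (Suc n)
    have "t ^ Suc n \<le> t" using t by (simp add: power_le_one mult_left_le)
    then have "norm (shimizu_seq h n $2$1) \<le> t"
      using norm_lower_left_shimizu_seq[OF assms(1), of n] t by (simp add: t_def)
    have "norm (shimizu_seq h (Suc n) $1$1) \<le> 1 + norm (shimizu_seq h n $1$1) * norm (shimizu_seq h n $2$1)"
      unfolding shimizu_seq_Suc_entries(1)[OF assms(1)]
      by (metis norm_mult norm_one norm_triangle_ineq4)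
    also have "\<dots> \<le> 1 + K * t"
      using Suc.IH \<open>norm (shimizu_seq h n $2$1) \<le> t\<close> K by (intro add_left_mono mult_mono) auto
    finally show ?case using K by linarith
  qed
  then show ?thesis using that by blast
qed

lemma shimizu_seq_tendsto:
  assumes det: "det h = 1" and small: "norm (h$2$1) < 1"
  shows "shimizu_seq h \<longlonglongrightarrow> shift"
proof -
  define a where "a n = shimizu_seq h n $1$1" for n
  define c where "c n = shimizu_seq h n $2$1" for n
  define t where "t = norm (h$2$1)"
  obtain K where K: "\<And>n. norm (a n) \<le> K"
    using bounded_upper_left_shimizu_seq[OF det small] unfolding a_def by blast
  have t: "0 \<le> t" "t < 1" using small by (simp_all add: t_def)
  have c_bound: "norm (c n) \<le> t ^ Suc n" for n
    using norm_lower_left_shimizu_seq[OF det] small by (simp add: c_def t_def)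
  have t_pow: "(\<lambda>n. t ^ Suc n) \<longlonglongrightarrow> 0"
    using t by (intro LIMSEQ_Suc LIMSEQ_power_zero) auto
  have c: "c \<longlonglongrightarrow> 0"
    using c_bound by (intro Lim_null_comparison[OF _ t_pow] always_eventually) simp
  have "norm (a n * c n) \<le> K * t ^ Suc n" for n
    using K[of n] c_bound[of n] by (simp add: norm_mult mult_mono')
  then have ac: "(\<lambda>n. a n * c n) \<longlonglongrightarrow> 0"
    by (intro Lim_null_comparison[OF _ tendsto_mult_right_zero[OF t_pow, where c = K]] always_eventually) simp
  have a_Suc: "a (Suc n) = 1 - a n * c n" for n
    using shimizu_seq_Suc_entries(1)[OF det] by (simp add: a_def c_def)
  have a_lim: "(\<lambda>n. a (Suc n)) \<longlonglongrightarrow> 1 - 0"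
    unfolding a_Suc by (intro tendsto_intros ac)
  have seq_Suc: "shimizu_seq h (Suc n) = mk2 (1 - a n * c n) ((a n)\<^sup>2) (- (c n)\<^sup>2) (1 + a n * c n)" for n
    using conj_by_shift[OF det_shimizu_seq[OF det]] by (simp add: shimizu_seq_Suc a_def c_def)
  have "(\<lambda>n. shimizu_seq h (Suc (Suc n))) \<longlonglongrightarrow> mk2 (1 - 0) ((1 - 0)\<^sup>2) (- 0\<^sup>2) (1 + 0)"
    unfolding seq_Suc
    by (intro tendsto_mk2 tendsto_diff tendsto_add tendsto_minus tendsto_power tendsto_const
        a_lim LIMSEQ_Suc[OF ac] LIMSEQ_Suc[OF c])
  then have "(\<lambda>n. shimizu_seq h (Suc (Suc n))) \<longlonglongrightarrow> shift" by simp
  then show ?thesis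
    by (intro LIMSEQ_imp_Suc[where f = "shimizu_seq h"] LIMSEQ_imp_Suc[where f = "\<lambda>n. shimizu_seq h (Suc n)"])
qed

lemma lower_left_shimizu_seq_nonzero:
  assumes "det h = 1" "h$2$1 \<noteq> 0"
  shows "shimizu_seq h n $2$1 \<noteq> 0"
  using assms by (induction n) (simp_all add: shimizu_seq_Suc_entries(2))

lemma shimizu_seq_in_group:
  assumes "shift \<in> G" "h \<in> G"
    and "\<And>g g'. g \<in> G \<Longrightarrow> g' \<in> G \<Longrightarrow> g ** g' \<in> G" "\<And>g. g \<in> G \<Longrightarrow> inv2 g \<in> G"
  shows "shimizu_seq h n \<in> G"
  using assms by (induction n) (simp_all add: shimizu_seq_Suc conj_by_def)

theorem shimizu_lemma:
  assumes "discrete_group G" "shift \<in> G"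
    and "\<And>g g'. g \<in> G \<Longrightarrow> g' \<in> G \<Longrightarrow> g ** g' \<in> G" "\<And>g. g \<in> G \<Longrightarrow> inv2 g \<in> G"
    and "h \<in> G" "det h = 1"
  shows "h$2$1 = 0 \<or> 1 \<le> norm (h$2$1)"
proof (rule ccontr)
  assume "\<not> ?thesis"
  then have c: "h$2$1 \<noteq> 0" "norm (h$2$1) < 1" by auto
  obtain e where "e > 0" and isolated: "\<And>g. g \<in> G \<Longrightarrow> dist g shift < e \<Longrightarrow> g = shift"
    using assms(1,2) unfolding discrete_group_def by blast
  have "\<forall>\<^sub>F n in sequentially. dist (shimizu_seq h n) shift < e"
    using tendstoD[OF shimizu_seq_tendsto[OF assms(6) c(2)] \<open>e > 0\<close>] .
  then obtain n where "dist (shimizu_seq h n) shift < e"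
    by (meson eventually_sequentially order_refl)
  then have "shimizu_seq h n = shift"
    using isolated shimizu_seq_in_group[OF assms(2,5,3,4)] by blast
  then show False
    using lower_left_shimizu_seq_nonzero[OF assms(6) c(1), of n] by simp
qed

section \<open>Word polynomials on the Riley slice\<close>

definition normalizes :: "mat2 \<Rightarrow> mat2 set \<Rightarrow> bool" where
  "normalizes E G \<longleftrightarrow> (\<forall>g\<in>G. conj_by E g \<in> G)"

lemma normalizes_one: "normalizes (mat 1) G"
  by (simp add: normalizes_def conj_by_def)

lemma normalizes_mult: "normalizes A G \<Longrightarrow> normalizes B G \<Longrightarrow> normalizes (A ** B) G"
  by (simp add: normalizes_def conj_by_matrix_mul)

lemma normalizes_gen_group_mem: "g \<in> gen_group S \<Longrightarrow> normalizes g (gen_group S)"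
  by (simp add: normalizes_def conj_by_def gen_group.gen_mult gen_group.gen_inv)

lemma normalizes_gen_group:
  assumes "det E = 1" and "\<And>s. s \<in> S \<Longrightarrow> conj_by E s \<in> gen_group S"
  shows "normalizes E (gen_group S)"
  unfolding normalizes_def
proof
  fix g assume "g \<in> gen_group S"
  then show "conj_by E g \<in> gen_group S"
  proof (induction rule: gen_group.induct)
    case gen_one
    then show ?case using assms(1) by (simp add: conj_by_one gen_group.gen_one)
  next
    case (gen_base s)
    then show ?case by (rule assms(2))
  next
    case (gen_mult g h)
    then show ?case using conj_by_mult[OF assms(1), of g h] by (metis gen_group.gen_mult)
  next
    case (gen_inv g)
    then show ?case using inv2_conj_by[of E g] by (metis gen_group.gen_inv)
  qed
qed

lemma mpow_in_gen_group:
  assumes "A \<in> gen_group S"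
  shows "mpow A m \<in> gen_group S"
proof -
  have "((\<lambda>X. X ** B) ^^ n) (mat 1) \<in> gen_group S" if "B \<in> gen_group S" for B n
    using that by (induction n) (simp_all add: gen_group.gen_one gen_group.gen_mult)
  then show ?thesis using assms by (simp add: mpow_def gen_group.gen_inv)
qed

lemma shift_in_Gamma: "shift \<in> Gamma z"
  by (simp add: Gamma_def gen_group.gen_base)

lemma elliptic_normalizes_Gamma:
  assumes "c \<noteq> 0"
  shows "normalizes (elliptic c) (Gamma (c\<^sup>2))"
  unfolding Gamma_def
proof (rule normalizes_gen_group)
  show "det (elliptic c) = 1" using assms by (simp add: elliptic_def mk2_simps)
  let ?S = "{shift, mk2 1 0 (c\<^sup>2) 1, - mat 1}"
  have gens: "s \<in> gen_group ?S" "inv2 s \<in> gen_group ?S" if "s \<in> ?S" for s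
    using that by (simp_all add: gen_group.gen_base gen_group.gen_inv)
  have "conj_by (elliptic c) shift = inv2 (mk2 1 0 (c\<^sup>2) 1)"
    and "conj_by (elliptic c) (mk2 1 0 (c\<^sup>2) 1) = inv2 shift"
    and "conj_by (elliptic c) (- mat 1) = - mat 1"
    using assms by (simp_all add: conj_by_def elliptic_def mk2_simps power2_eq_square)
  then show "conj_by (elliptic c) s \<in> gen_group ?S" if "s \<in> ?S" for s
    using that gens by auto
qed

lemma eval_word_normalizes_Gamma:
  assumes "c \<noteq> 0"
  shows "normalizes (eval_word ms shift (elliptic c)) (Gamma (c\<^sup>2))"
proof -
  have "normalizes (mpow shift m) (Gamma (c\<^sup>2))" for m
    using shift_in_Gamma unfolding Gamma_def by (intro normalizes_gen_group_mem mpow_in_gen_group)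
  with elliptic_normalizes_Gamma[OF assms] show ?thesis
    by (induction ms shift "elliptic c" rule: eval_word.induct) (simp_all add: normalizes_one normalizes_mult)
qed

lemma word_poly_zero_or_norm_ge_1:
  assumes "discrete_group (Gamma u)"
  shows "ipoly (word_poly ms) u = 0 \<or> 1 \<le> norm (ipoly (word_poly ms) u)"
proof (cases "u = 0")
  case True
  then show ?thesis by (simp add: word_poly_eq_explicit explicit_word_poly_at_0)
next
  case False
  define c where "c = csqrt u"
  have c: "c \<noteq> 0" "c\<^sup>2 = u" using False by (auto simp: c_def)
  define g where "g = eval_word ms shift (elliptic c)"
  have det_g: "det g = 1"
    using c by (simp add: g_def det_eval_word elliptic_def mk2_simps)
  have "conj_by g shift \<in> Gamma u"
    using eval_word_normalizes_Gamma[OF c(1)] shift_in_Gamma c(2) by (simp add: normalizes_def g_def)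
  moreover have "det (conj_by g shift) = 1" by (simp add: det_conj_by det_g mk2_simps)
  moreover have "conj_by g shift $2$1 = - ipoly (word_poly ms) u"
    using conj_by_shift[OF det_g] lower_left_eval_word_elliptic[OF c(1), of ms] c(2)
    by (simp add: g_def word_poly_eq_explicit)
  ultimately show ?thesis
    using shimizu_lemma[OF assms shift_in_Gamma, of "conj_by g shift"]
    by (simp add: Gamma_def gen_group.gen_mult gen_group.gen_inv)
qed

section \<open>Normal families of functions omitting the punctured unit disc\<close>

lemma connected_zero_or_norm_ge_1:
  fixes p :: "'a::topological_space \<Rightarrow> 'b::real_normed_vector"
  assumes "connected U" "continuous_on U p" "\<And>u. u \<in> U \<Longrightarrow> p u = 0 \<or> 1 \<le> norm (p u)"
  shows "(\<forall>u\<in>U. p u = 0) \<or> (\<forall>u\<in>U. 1 \<le> norm (p u))"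
proof -
  have "U \<inter> p -` {0} = U \<inter> p -` ball 0 1"
    using assms(3) by force
  then have "openin (top_of_set U) (U \<inter> p -` {0})"
    using continuous_openin_preimage_gen[OF assms(2) open_ball] by simp
  moreover have "closedin (top_of_set U) (U \<inter> p -` {0})"
    using continuous_closedin_preimage[OF assms(2) closed_singleton] .
  ultimately have "U \<inter> p -` {0} = {} \<or> U \<inter> p -` {0} = U"
    using assms(1) unfolding connected_clopen by blast
  then show ?thesis using assms(3) by blast
qed

lemma compact_norm_bounded_below:
  fixes g :: "'a::topological_space \<Rightarrow> 'b::real_normed_vector"
  assumes "compact K" "continuous_on K g" "\<And>x. x \<in> K \<Longrightarrow> g x \<noteq> 0"
  obtains b where "b > 0" "\<And>x. x \<in> K \<Longrightarrow> b \<le> norm (g x)"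
proof (cases "K = {}")
  case True
  then show ?thesis using that[of 1] by simp
next
  case False
  obtain x0 where "x0 \<in> K" "\<forall>y\<in>K. norm (g x0) \<le> norm (g y)"
    using continuous_attains_inf[OF assms(1) False continuous_on_norm[OF assms(2)]] by blast
  then show ?thesis using that[of "norm (g x0)"] assms(3) by auto
qed

lemma uniform_limit_inverse_nonvanishing:
  fixes h :: "'i \<Rightarrow> 'a::topological_space \<Rightarrow> 'b::real_normed_field"
  assumes "uniform_limit K h g F" "compact K" "continuous_on K g" "\<And>x. x \<in> K \<Longrightarrow> g x \<noteq> 0"
  shows "uniform_limit K (\<lambda>n x. inverse (h n x)) (inverse \<circ> g) F"
proof -
  obtain b where "b > 0" "\<And>x. x \<in> K \<Longrightarrow> b \<le> norm (g x)"
    using compact_norm_bounded_below[OF assms(2-4)] by blast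
  then show ?thesis using uniform_lim_inverse[OF assms(1)] by blast
qed

lemma uniform_limit_zero_inverse_diverges:
  fixes h :: "'i \<Rightarrow> 'a \<Rightarrow> 'b::real_normed_field"
  assumes "uniform_limit K h (\<lambda>_. 0) F" "\<And>n x. x \<in> K \<Longrightarrow> h n x \<noteq> 0"
  shows "\<forall>\<^sub>F n in F. \<forall>x\<in>K. B \<le> norm (inverse (h n x))"
proof -
  define M where "M = max B 1"
  have "\<forall>\<^sub>F n in F. \<forall>x\<in>K. dist (h n x) 0 < inverse M"
    using uniform_limitD[OF assms(1)] by (simp add: M_def)
  then show ?thesis
  proof (rule eventually_mono, intro ballI)
    fix n x
    assume "\<forall>x\<in>K. dist (h n x) 0 < inverse M" and "x \<in> K"
    then have "norm (h n x) < inverse M" by simp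
    then have "M < inverse (norm (h n x))"
      using less_imp_inverse_less[of "norm (h n x)" "inverse M"] assms(2)[OF \<open>x \<in> K\<close>] by (simp add: M_def)
    then show "B \<le> norm (inverse (h n x))" by (simp add: norm_inverse M_def)
  qed
qed

definition compactly_convergent_or_divergent :: "complex set \<Rightarrow> (nat \<Rightarrow> complex \<Rightarrow> complex) \<Rightarrow> bool" where
  "compactly_convergent_or_divergent U f \<longleftrightarrow>
     (\<exists>g. \<forall>K. compact K \<and> K \<subseteq> U \<longrightarrow> uniform_limit K f g sequentially) \<or>
     (\<forall>K. compact K \<and> K \<subseteq> U \<longrightarrow> (\<forall>B. eventually (\<lambda>n. \<forall>x\<in>K. B \<le> norm (f n x)) sequentially))"

lemma normal_family_on_iff:
  "normal_family_on F U \<longleftrightarrow>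
     (\<forall>f. (\<forall>n. f n \<in> F) \<longrightarrow> (\<exists>r :: nat \<Rightarrow> nat. strict_mono r \<and> compactly_convergent_or_divergent U (f \<circ> r)))"
  by (simp add: normal_family_on_def compactly_convergent_or_divergent_def comp_def)

lemma Montel_inverse:
  assumes "open U" and hol: "\<And>n. f n holomorphic_on U" and ge_1: "\<And>n z. z \<in> U \<Longrightarrow> 1 \<le> norm (f n z)"
  obtains g and r :: "nat \<Rightarrow> nat" where "g holomorphic_on U" "strict_mono r"
    "\<And>K. compact K \<Longrightarrow> K \<subseteq> U \<Longrightarrow> uniform_limit K ((\<lambda>n z. inverse (f n z)) \<circ> r) g sequentially"
proof -
  define h where "h = (\<lambda>n z. inverse (f n z))"
  have "f n z \<noteq> 0" if "z \<in> U" for n z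
    using ge_1[OF that, of n] by auto
  then have hol_h: "h n holomorphic_on U" for n
    unfolding h_def using hol by (intro holomorphic_intros) auto
  obtain g and r :: "nat \<Rightarrow> nat" where "g holomorphic_on U" "strict_mono r"
    "\<And>K. compact K \<Longrightarrow> K \<subseteq> U \<Longrightarrow> uniform_limit K (h \<circ> r) g sequentially"
  proof (rule Montel[OF assms(1), of "range h" h])
    show "\<exists>B. \<forall>h'\<in>range h. \<forall>z\<in>K. norm (h' z) \<le> B" if "K \<subseteq> U" for K
      using ge_1 that by (intro exI[of _ 1]) (auto simp: h_def norm_inverse inverse_le_1_iff)
  qed (use hol_h in auto)
  then show ?thesis unfolding h_def by (rule that)
qed

text \<open>By Hurwitz's theorem the limit of the bounded functions \<open>1 / f n\<close> is either identically zero,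
  so that \<open>f n\<close> tends to infinity, or has no zeros.\<close>
lemma subseq_convergent_or_divergent_if_norm_ge_1:
  assumes U: "open U" "connected U"
    and hol: "\<And>n. f n holomorphic_on U" and ge_1: "\<And>n z. z \<in> U \<Longrightarrow> 1 \<le> norm (f n z)"
  obtains r :: "nat \<Rightarrow> nat" where "strict_mono r" "compactly_convergent_or_divergent U (f \<circ> r)"
proof -
  define h where "h = (\<lambda>n z. inverse (f n z))"
  have f_nonzero: "z \<in> U \<Longrightarrow> f n z \<noteq> 0" for n z
    using ge_1[of z n] by auto
  have h_hol: "h n holomorphic_on U" for n
    unfolding h_def using hol f_nonzero by (intro holomorphic_intros) auto
  obtain g and r :: "nat \<Rightarrow> nat" where g: "g holomorphic_on U" and r: "strict_mono r"
    and lim: "\<And>K. compact K \<Longrightarrow> K \<subseteq> U \<Longrightarrow> uniform_limit K (h \<circ> r) g sequentially"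
    using Montel_inverse[of U f, OF U(1) hol ge_1] unfolding h_def by blast
  have f_eq: "f \<circ> r = (\<lambda>n z. inverse ((h \<circ> r) n z))"
    by (simp add: h_def comp_def)
  show ?thesis
  proof (cases "\<exists>z0\<in>U. g z0 = 0")
    case True
    then obtain z0 where "z0 \<in> U" "g z0 = 0" by blast
    have "g constant_on U"
      using Hurwitz_no_zeros[OF U _ g lim _ _ \<open>z0 \<in> U\<close>] h_hol f_nonzero \<open>g z0 = 0\<close>
      by (auto simp: h_def)
    with \<open>z0 \<in> U\<close> \<open>g z0 = 0\<close> have g0: "\<And>z. z \<in> U \<Longrightarrow> g z = 0"
      unfolding constant_on_def by metis
    have "\<forall>\<^sub>F n in sequentially. \<forall>x\<in>K. B \<le> norm ((f \<circ> r) n x)"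
      if K: "compact K" "K \<subseteq> U" for K B
    proof -
      have "uniform_limit K (h \<circ> r) (\<lambda>_. 0) sequentially"
        using lim[OF K] g0 K(2) by (subst uniform_limit_cong'[where h = "\<lambda>_. 0"]) auto
      from uniform_limit_zero_inverse_diverges[OF this] show ?thesis
        using f_nonzero K(2) by (auto simp: f_eq h_def)
    qed
    then show ?thesis
      using r by (intro that) (auto simp: compactly_convergent_or_divergent_def)
  next
    case False
    have "uniform_limit K (f \<circ> r) (inverse \<circ> g) sequentially" if K: "compact K" "K \<subseteq> U" for K
      unfolding f_eq
    proof (rule uniform_limit_inverse_nonvanishing[OF lim[OF K] K(1)])
      show "continuous_on K g"
        using holomorphic_on_imp_continuous_on[OF g] K(2) by (rule continuous_on_subset)
      show "g x \<noteq> 0" if "x \<in> K" for x using False K(2) that by blast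
    qed
    then show ?thesis
      using r that unfolding compactly_convergent_or_divergent_def by blast
  qed
qed

lemma normal_family_on_if_zero_or_norm_ge_1:
  assumes U: "open U" "connected U"
    and hol: "\<And>p. p \<in> F \<Longrightarrow> p holomorphic_on U"
    and omit: "\<And>p u. p \<in> F \<Longrightarrow> u \<in> U \<Longrightarrow> p u = 0 \<or> 1 \<le> norm (p u)"
  shows "normal_family_on F U"
  unfolding normal_family_on_iff
proof (intro allI impI)
  fix f :: "nat \<Rightarrow> complex \<Rightarrow> complex"
  assume F: "\<forall>n. f n \<in> F"
  let ?zero = "{n. \<forall>u\<in>U. f n u = 0}" and ?large = "{n. \<forall>u\<in>U. 1 \<le> norm (f n u)}"
  have "(\<forall>u\<in>U. f n u = 0) \<or> (\<forall>u\<in>U. 1 \<le> norm (f n u))" for n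
    using connected_zero_or_norm_ge_1[OF U(2) holomorphic_on_imp_continuous_on] hol omit F by blast
  then have "?zero \<union> ?large = UNIV" by blast
  then have "infinite (?zero \<union> ?large)" by (simp only:) simp
  then consider "infinite ?zero" | "infinite ?large" by auto
  then show "\<exists>r :: nat \<Rightarrow> nat. strict_mono r \<and> compactly_convergent_or_divergent U (f \<circ> r)"
  proof cases
    case 1
    then obtain r :: "nat \<Rightarrow> nat" where r: "strict_mono r" "\<And>n. r n \<in> ?zero"
      using infinite_enumerate by blast
    have "uniform_limit K (f \<circ> r) (\<lambda>_. 0) sequentially" if "K \<subseteq> U" for K
      using r(2) that by (intro uniform_limitI always_eventually) auto
    then show ?thesis using r(1) unfolding compactly_convergent_or_divergent_def by blast
  next
    case 2
    then obtain r0 :: "nat \<Rightarrow> nat" where r0: "strict_mono r0" "\<And>n. r0 n \<in> ?large"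
      using infinite_enumerate by blast
    obtain r where "strict_mono r" "compactly_convergent_or_divergent U (f \<circ> r0 \<circ> r)"
      by (rule subseq_convergent_or_divergent_if_norm_ge_1[OF U, of "f \<circ> r0"]) (use hol F r0(2) in auto)
    then show ?thesis using strict_mono_o[OF r0(1)] by (metis comp_assoc)
  qed
qed

theorem corollary4:
  shows "interior riley_slice \<subseteq> fatou_set word_semigroup"
proof
  fix z assume "z \<in> interior riley_slice"
  then obtain \<epsilon> where "\<epsilon> > 0" and ball: "ball z \<epsilon> \<subseteq> riley_slice"
    by (auto simp: mem_interior)
  have "normal_family_on word_semigroup (ball z \<epsilon>)"
  proof (rule normal_family_on_if_zero_or_norm_ge_1)
    show "p holomorphic_on ball z \<epsilon>" if "p \<in> word_semigroup" for p
      using that unfolding word_semigroup_def by (auto intro!: holomorphic_intros)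
    show "p u = 0 \<or> 1 \<le> norm (p u)" if "p \<in> word_semigroup" "u \<in> ball z \<epsilon>" for p u
    proof -
      obtain w where "p = ipoly (word_poly w)" using \<open>p \<in> word_semigroup\<close> by (auto simp: word_semigroup_def)
      moreover have "discrete_group (Gamma u)" using ball \<open>u \<in> ball z \<epsilon>\<close> by (auto simp: riley_slice_def)
      ultimately show ?thesis using word_poly_zero_or_norm_ge_1 by simp
    qed
  qed auto
  then show "z \<in> fatou_set word_semigroup"
    unfolding fatou_set_def using \<open>\<epsilon> > 0\<close> by (intro CollectI exI[of _ "ball z \<epsilon>"]) simp
qed

end
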